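(* Let $R$ be a commutative multiplicative hyperring with identity having the zero absorbing property, let $\alpha$ be a good endomorphism of $R$, and let $I$ be a hyperideal of $R$. Suppose that for all $a,b\in R$, $a\circ b\subseteq I$ implies $a\in I$ or $\alpha(b^n)\subseteq I$ for some $n\in\mathbb N$. Then $\sqrt[\alpha]{I}$ is an $\alpha$-prime hyperideal of $R$.
   Context: A multiplicative hyperring is an abelian group $(R,+)$ with a hyperoperation $\circ:R\times R\to \mathcal P^*(R)$ (nonempty subsets) such that $a\circ(b\circ c)=(a\circ b)\circ c$, $a\circ(b+c)\subseteq a\circ b+a\circ c$, $(b+c)\circ a\subseteq b\circ a+c\circ a$, and $a\circ(-b)=(-a)\circ b=-(a\circ b)$. Products of subsets are unions of elementwise products, and $x^n=x\circ\cdots\circ x$ ($n$ factors). Commutative means $a\circ b=b\circ a$. An identity $1$ satisfies $a\in1\circ a$ for all $a$. $R$ has the zero absorbing property if $0\circ r=r\circ0=\{0\}$ for all $r$. A hyperideal is a nonempty $I$ closed under subtraction with $r\circ x\subseteq I$ for $r\in R$, $x\in I$. Standing assumption: all hyperideals are $\mathbf C$-hyperideals, i.e. for every finite product $A=r_1\circ\cdots\circ r_n$, $A\cap I\ne\emptyset$ implies $A\subseteq I$. A good endomorphism $\alpha$ satisfies $\alpha(x+y)=\alpha(x)+\alpha(y)$ and $\alpha(x\circ y)=\alpha(x)\circ\alpha(y)$; it is applied to sets elementwise. The $\alpha$-radical is $\sqrt[\alpha]{I}=\{r:\alpha(r^n)\subseteq I\text{ for some }n\in\mathbb N\}$. A hyperideal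 $J$ is $\alpha$-prime if for all $x,y$, $x\circ y\subseteq J$ implies $x\in J$ or $\alpha(y)\in J$. *)

theory Defs
  imports Main
begin

(* A hyperoperation on the carrier type 'a, whose additive abelian group is given by ab_group_add *)
type_synonym 'a hyperop = "'a \<Rightarrow> 'a \<Rightarrow> 'a set"

definition hprod :: "'a hyperop \<Rightarrow> 'a set \<Rightarrow> 'a set \<Rightarrow> 'a set" where
  "hprod m A B = (\<Union>a\<in>A. \<Union>b\<in>B. m a b)"

definition hsum :: "'a::ab_group_add set \<Rightarrow> 'a set \<Rightarrow> 'a set" where
  "hsum A B = {a + b | a b. a \<in> A \<and> b \<in> B}"

definition mult_hyperring :: "('a::ab_group_add) hyperop \<Rightarrow> bool" where
  "mult_hyperring m \<longleftrightarrow>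
     (\<forall>a b. m a b \<noteq> {}) \<and>
     (\<forall>a b c. hprod m {a} (m b c) = hprod m (m a b) {c}) \<and>
     (\<forall>a b c. m a (b + c) \<subseteq> hsum (m a b) (m a c)) \<and>
     (\<forall>a b c. m (b + c) a \<subseteq> hsum (m b a) (m c a)) \<and>
     (\<forall>a b. m a (- b) = uminus ` (m a b) \<and> m (- a) b = uminus ` (m a b))"

definition hcommutative :: "'a hyperop \<Rightarrow> bool" where
  "hcommutative m \<longleftrightarrow> (\<forall>a b. m a b = m b a)"

definition hidentity :: "'a hyperop \<Rightarrow> 'a \<Rightarrow> bool" where
  "hidentity m e \<longleftrightarrow> (\<forall>a. a \<in> m e a)"

definition zero_absorbing :: "('a::zero) hyperop \<Rightarrow> bool" where
  "zero_absorbing m \<longleftrightarrow> (\<forall>r. m 0 r = {0} \<and> m r 0 = {0})"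

(* hpow m x n = x^(n+1) = x \<circ> ... \<circ> x  (n+1 factors) *)
primrec hpow :: "'a hyperop \<Rightarrow> 'a \<Rightarrow> nat \<Rightarrow> 'a set" where
  "hpow m x 0 = {x}"
| "hpow m x (Suc n) = hprod m (hpow m x n) {x}"

fun hlistprod :: "'a hyperop \<Rightarrow> 'a list \<Rightarrow> 'a set" where
  "hlistprod m [] = {}"
| "hlistprod m [r] = {r}"
| "hlistprod m (r # rs) = hprod m {r} (hlistprod m rs)"

definition hyperideal :: "('a::ab_group_add) hyperop \<Rightarrow> 'a set \<Rightarrow> bool" where
  "hyperideal m I \<longleftrightarrow> I \<noteq> {} \<and> (\<forall>x\<in>I. \<forall>y\<in>I. x - y \<in> I) \<and>
     (\<forall>r x. x \<in> I \<longrightarrow> m r x \<subseteq> I)"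

definition C_hyperideal :: "('a::ab_group_add) hyperop \<Rightarrow> 'a set \<Rightarrow> bool" where
  "C_hyperideal m I \<longleftrightarrow> hyperideal m I \<and>
     (\<forall>rs. rs \<noteq> [] \<longrightarrow> hlistprod m rs \<inter> I \<noteq> {} \<longrightarrow> hlistprod m rs \<subseteq> I)"

definition good_endo :: "('a::ab_group_add) hyperop \<Rightarrow> ('a \<Rightarrow> 'a) \<Rightarrow> bool" where
  "good_endo m \<alpha> \<longleftrightarrow> (\<forall>x y. \<alpha> (x + y) = \<alpha> x + \<alpha> y) \<and>
     (\<forall>x y. \<alpha> ` (m x y) = m (\<alpha> x) (\<alpha> y))"

(* alpha-radical: r such that alpha(r^n) \<subseteq> I for some n \<ge> 1 (hpow m r k = r^(k+1)) *)
definition alpha_radical :: "'a hyperop \<Rightarrow> ('a \<Rightarrow> 'a) \<Rightarrow> 'a set \<Rightarrow> 'a set" where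
  "alpha_radical m \<alpha> I = {r. \<exists>k. \<alpha> ` (hpow m r k) \<subseteq> I}"

definition alpha_prime :: "('a::ab_group_add) hyperop \<Rightarrow> ('a \<Rightarrow> 'a) \<Rightarrow> 'a set \<Rightarrow> bool" where
  "alpha_prime m \<alpha> J \<longleftrightarrow> hyperideal m J \<and>
     (\<forall>x y. m x y \<subseteq> J \<longrightarrow> x \<in> J \<or> \<alpha> y \<in> J)"

end

theory Submission
  imports Defs
begin

(* Pulling I back along \<alpha> turns the \<alpha>-radical into the ordinary radical of the
   hyperideal \<alpha>^-1(I), and radicals of hyperideals are hyperideals by the binomial
   argument: if x^(n+1) and y^(n+1) lie in a hyperideal, so does every monomial of
   (x + y)^(2n+2).
   For primality let x \<circ> y lie in the radical and pick z \<in> x \<circ> y with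
   \<alpha>(z^(k+1)) \<subseteq> I.  Then \<alpha>(x)^(k+1) \<circ> \<alpha>(y)^(k+1) meets I, hence lies in I by the
   C-property.  Either \<alpha>(x)^(k+1) \<subseteq> I, or there are a \<in> \<alpha>(x)^(k+1) - I and
   b \<in> \<alpha>(y)^(k+1) with a \<circ> b \<subseteq> I.  The hypothesis on I gives \<alpha>(b^(j+1)) \<subseteq> I; since b^(j+1)
   is contained in a power P of \<alpha>(y), the set \<alpha>(P) meets I, so \<alpha>(P) \<subseteq> I by the
   C-property again, i.e. \<alpha>(y) lies in the \<alpha>-radical. *)

lemma mult_hyperring_nonempty: "mult_hyperring m \<Longrightarrow> m a b \<noteq> {}"
  by (simp add: mult_hyperring_def)

lemma mult_hyperring_assoc: "mult_hyperring m \<Longrightarrow> hprod m {a} (m b c) = hprod m (m a b) {c}"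
  by (simp add: mult_hyperring_def)

lemma mult_hyperring_distrib_left: "mult_hyperring m \<Longrightarrow> m a (b + c) \<subseteq> hsum (m a b) (m a c)"
  by (simp add: mult_hyperring_def)

lemma mult_hyperring_distrib_right: "mult_hyperring m \<Longrightarrow> m (b + c) a \<subseteq> hsum (m b a) (m c a)"
  by (simp add: mult_hyperring_def)

lemma mult_hyperring_minus_right: "mult_hyperring m \<Longrightarrow> m a (- b) = uminus ` m a b"
  by (simp add: mult_hyperring_def)

lemma mult_hyperring_minus_left: "mult_hyperring m \<Longrightarrow> m (- a) b = uminus ` m a b"
  by (simp add: mult_hyperring_def)

lemma hprod_iff: "z \<in> hprod m A B \<longleftrightarrow> (\<exists>a\<in>A. \<exists>b\<in>B. z \<in> m a b)"
  unfolding hprod_def by blast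

lemma subset_hprodI: "a \<in> A \<Longrightarrow> b \<in> B \<Longrightarrow> m a b \<subseteq> hprod m A B"
  unfolding hprod_def by blast

lemma hprod_singletons [simp]: "hprod m {a} {b} = m a b"
  by (simp add: hprod_def)

lemma hprod_mono: "A \<subseteq> A' \<Longrightarrow> B \<subseteq> B' \<Longrightarrow> hprod m A B \<subseteq> hprod m A' B'"
  by (auto simp: hprod_def)

lemma hprod_nonempty: "mult_hyperring m \<Longrightarrow> A \<noteq> {} \<Longrightarrow> B \<noteq> {} \<Longrightarrow> hprod m A B \<noteq> {}"
  using mult_hyperring_nonempty by (fastforce simp: hprod_iff)

lemma hprod_commute: "hcommutative m \<Longrightarrow> hprod m A B = hprod m B A"
  unfolding hcommutative_def hprod_iff set_eq_iff by metis

lemma hprod_assoc: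
  assumes "mult_hyperring m"
  shows "hprod m (hprod m A B) C = hprod m A (hprod m B C)"
proof -
  have elem: "(\<exists>w\<in>m a b. z \<in> m w c) \<longleftrightarrow> (\<exists>w\<in>m b c. z \<in> m a w)" for a b c z
    using mult_hyperring_assoc[OF assms, of a b c] by (simp add: set_eq_iff hprod_iff)
  show ?thesis
  proof (rule set_eqI)
    fix z
    have "z \<in> hprod m (hprod m A B) C \<longleftrightarrow> (\<exists>a\<in>A. \<exists>b\<in>B. \<exists>c\<in>C. \<exists>w\<in>m a b. z \<in> m w c)"
      unfolding hprod_def by blast
    also have "\<dots> \<longleftrightarrow> (\<exists>a\<in>A. \<exists>b\<in>B. \<exists>c\<in>C. \<exists>w\<in>m b c. z \<in> m a w)"
      using elem by meson
    also have "\<dots> \<longleftrightarrow> z \<in> hprod m A (hprod m B C)"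
      unfolding hprod_def by blast
    finally show "z \<in> hprod m (hprod m A B) C \<longleftrightarrow> z \<in> hprod m A (hprod m B C)" .
  qed
qed

lemma image_hprod: "good_endo m \<alpha> \<Longrightarrow> \<alpha> ` hprod m A B = hprod m (\<alpha> ` A) (\<alpha> ` B)"
  unfolding good_endo_def hprod_def by (simp add: image_UN)

lemma image_hpow: "good_endo m \<alpha> \<Longrightarrow> \<alpha> ` hpow m x k = hpow m (\<alpha> x) k"
  by (induction k) (simp_all add: image_hprod)

lemma hpow_nonempty: "mult_hyperring m \<Longrightarrow> hpow m x k \<noteq> {}"
  by (induction k) (simp_all add: hprod_nonempty)

lemma hpow_add:
  assumes "mult_hyperring m"
  shows "hprod m (hpow m x i) (hpow m x j) = hpow m x (i + j + 1)"
proof (induction j)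
  case (Suc j)
  then show ?case
    using hprod_assoc[OF assms, of "hpow m x i" "hpow m x j" "{x}"] by simp
qed simp

lemma hpow_hpow_subset:
  assumes "mult_hyperring m" and "z \<in> hpow m x k"
  shows "hpow m z j \<subseteq> hpow m x ((k + 1) * (j + 1) - 1)"
proof (induction j)
  case (Suc j)
  have "hpow m z (Suc j) \<subseteq> hprod m (hpow m x ((k + 1) * (j + 1) - 1)) (hpow m x k)"
    unfolding hpow.simps(2) using Suc assms(2) by (intro hprod_mono) auto
  also have "\<dots> = hpow m x ((k + 1) * (j + 1) - 1 + k + 1)"
    by (rule hpow_add[OF assms(1)])
  also have "(k + 1) * (j + 1) - 1 + k + 1 = (k + 1) * (Suc j + 1) - 1"
    by simp
  finally show ?case .
qed (use assms in simp)

lemma hpow_hprod_subset: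
  assumes "mult_hyperring m" and "hcommutative m" and "z \<in> m x y"
  shows "hpow m z k \<subseteq> hprod m (hpow m x k) (hpow m y k)"
proof (induction k)
  case (Suc k)
  let ?X = "hpow m x k" and ?Y = "hpow m y k"
  have "hpow m z (Suc k) \<subseteq> hprod m (hprod m ?X ?Y) (hprod m {x} {y})"
    unfolding hpow.simps(2) using Suc assms(3) by (intro hprod_mono) auto
  also have "\<dots> = hprod m ?X (hprod m (hprod m ?Y {x}) {y})"
    using hprod_assoc[OF assms(1)] by (simp del: hprod_singletons)
  also have "\<dots> = hprod m ?X (hprod m (hprod m {x} ?Y) {y})"
    using hprod_commute[OF assms(2), of ?Y "{x}"] by simp
  also have "\<dots> = hprod m (hpow m x (Suc k)) (hpow m y (Suc k))"
    using hprod_assoc[OF assms(1)] by (simp del: hprod_singletons)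
  finally show ?case .
qed (use assms in simp)

lemma hpow_uminus_subset:
  assumes "mult_hyperring m"
  shows "hpow m (- y) k \<subseteq> hpow m y k \<union> uminus ` hpow m y k"
proof (induction k)
  case (Suc k)
  show ?case
  proof
    fix z assume "z \<in> hpow m (- y) (Suc k)"
    then obtain w where w: "w \<in> hpow m (- y) k" and "z \<in> m w (- y)"
      by (auto simp: hprod_iff)
    then have "- z \<in> m w y" and "z \<in> m (- w) y"
      using mult_hyperring_minus_right[OF assms] mult_hyperring_minus_left[OF assms] by force+
    moreover have "w \<in> hpow m y k \<or> - w \<in> hpow m y k"
      using Suc w by auto
    ultimately show "z \<in> hpow m y (Suc k) \<union> uminus ` hpow m y (Suc k)"
      by (force simp: hprod_iff)
  qed
qed simp

lemma hlistprod_Cons: "rs \<noteq> [] \<Longrightarrow> hlistprod m (r # rs) = hprod m {r} (hlistprod m rs)"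
  by (cases rs) auto

lemma hlistprod_append:
  assumes "mult_hyperring m" and "xs \<noteq> []" and "ys \<noteq> []"
  shows "hlistprod m (xs @ ys) = hprod m (hlistprod m xs) (hlistprod m ys)"
  using assms(2)
proof (induction xs)
  case (Cons a xs)
  then show ?case
    using assms(3) hprod_assoc[OF assms(1)] by (cases "xs = []") (simp_all add: hlistprod_Cons)
qed simp

lemma hlistprod_replicate:
  assumes "mult_hyperring m"
  shows "hlistprod m (replicate (Suc k) x) = hpow m x k"
proof (induction k)
  case (Suc k)
  then show ?case
    using hlistprod_Cons[of "replicate (Suc k) x" m x] hpow_add[OF assms, of x 0 k] by simp
qed simp

lemma hyperideal_zero: "hyperideal m K \<Longrightarrow> (0::'a::ab_group_add) \<in> K"
  unfolding hyperideal_def by (metis all_not_in_conv diff_self)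

lemma hyperideal_uminus: "hyperideal m K \<Longrightarrow> x \<in> K \<Longrightarrow> - (x::'a::ab_group_add) \<in> K"
  using hyperideal_zero unfolding hyperideal_def by (metis diff_0)

lemma hyperideal_add: "hyperideal m K \<Longrightarrow> x \<in> K \<Longrightarrow> y \<in> K \<Longrightarrow> (x::'a::ab_group_add) + y \<in> K"
  using hyperideal_uminus unfolding hyperideal_def by (metis diff_minus_eq_add)

lemma hsum_subset_hyperideal: "hyperideal m K \<Longrightarrow> A \<subseteq> K \<Longrightarrow> B \<subseteq> K \<Longrightarrow> hsum A B \<subseteq> K"
  unfolding hsum_def using hyperideal_add by blast

lemma hprod_subset_hyperideal_right: "hyperideal m K \<Longrightarrow> B \<subseteq> K \<Longrightarrow> hprod m A B \<subseteq> K"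
  unfolding hyperideal_def hprod_def by blast

lemma hprod_subset_hyperideal_left:
  "hcommutative m \<Longrightarrow> hyperideal m K \<Longrightarrow> A \<subseteq> K \<Longrightarrow> hprod m A B \<subseteq> K"
  by (metis hprod_commute hprod_subset_hyperideal_right)

lemma hprod_hsum_subset_hyperideal:
  assumes "mult_hyperring m" and "hyperideal m K"
    and "hprod m A C \<subseteq> K" and "hprod m B C \<subseteq> K"
  shows "hprod m (hsum A B) C \<subseteq> K"
proof
  fix z assume "z \<in> hprod m (hsum A B) C"
  then obtain a b c where "a \<in> A" "b \<in> B" "c \<in> C" and z: "z \<in> m (a + b) c"
    by (auto simp: hprod_def hsum_def)
  then have "m a c \<subseteq> K" and "m b c \<subseteq> K"
    using assms(3,4) subset_hprodI[of _ _ _ C m] by blast+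
  then show "z \<in> K"
    using z mult_hyperring_distrib_right[OF assms(1)] hsum_subset_hyperideal[OF assms(2)] by blast
qed

lemma hprod_singleton_add_subset:
  assumes "mult_hyperring m"
  shows "hprod m A {x + y} \<subseteq> hsum (hprod m A {x}) (hprod m A {y})"
  using mult_hyperring_distrib_left[OF assms] by (fastforce simp: hprod_iff hsum_def)

lemma hpow_subset_hyperideal_mono:
  assumes "hcommutative m" and "hyperideal m K" and "hpow m x n \<subseteq> K" and "n \<le> n'"
  shows "hpow m x n' \<subseteq> K"
  using assms(4)
proof (induction n' rule: dec_induct)
  case (step n')
  then show ?case using hprod_subset_hyperideal_left[OF assms(1,2)] by simp
qed (use assms(3) in simp)

(* x^a \<circ> y^b; the empty product is {}, hence the side condition 1 \<le> a + b below. *)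
definition hmonomial :: "'a hyperop \<Rightarrow> 'a \<Rightarrow> 'a \<Rightarrow> nat \<Rightarrow> nat \<Rightarrow> 'a set" where
  "hmonomial m x y a b = hlistprod m (replicate a x @ replicate b y)"

lemma hmonomial_swap:
  assumes "mult_hyperring m" and "hcommutative m"
  shows "hmonomial m x y a b = hmonomial m y x b a"
proof (cases "a = 0 \<or> b = 0")
  case False
  then show ?thesis
    unfolding hmonomial_def
    using hlistprod_append[OF assms(1)] hprod_commute[OF assms(2)] by simp
qed (auto simp: hmonomial_def)

lemma hmonomial_subset_hyperideal_left:
  assumes "mult_hyperring m" and "hcommutative m" and "hyperideal m K"
    and "hpow m x n \<subseteq> K" and "n < a"
  shows "hmonomial m x y a b \<subseteq> K"
proof -
  have xs: "hlistprod m (replicate a x) \<subseteq> K"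
    using hlistprod_replicate[OF assms(1), of "a - 1" x] assms(5)
      hpow_subset_hyperideal_mono[OF assms(2-4), of "a - 1"] by simp
  show ?thesis
  proof (cases "b = 0")
    case False
    then show ?thesis
      unfolding hmonomial_def using assms(5) xs
      by (simp add: hlistprod_append[OF assms(1)] hprod_subset_hyperideal_left[OF assms(2,3)])
  qed (use xs in \<open>simp add: hmonomial_def\<close>)
qed

lemma hmonomial_subset_hyperideal:
  assumes "mult_hyperring m" and "hcommutative m" and "hyperideal m K"
    and "hpow m x n \<subseteq> K" and "hpow m y n \<subseteq> K" and "2 * n + 2 \<le> a + b"
  shows "hmonomial m x y a b \<subseteq> K"
proof (cases "n < a")
  case False
  then show ?thesis
    using hmonomial_subset_hyperideal_left[OF assms(1-3,5), of b x a] assms(6)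
      hmonomial_swap[OF assms(1,2)] by simp
qed (use hmonomial_subset_hyperideal_left[OF assms(1-4)] in blast)

lemma hmonomial_hprod_add_subset:
  assumes "mult_hyperring m" and "hcommutative m" and "1 \<le> a + b"
  shows "hprod m (hmonomial m x y a b) {x + y}
           \<subseteq> hsum (hmonomial m x y (Suc a) b) (hmonomial m x y a (Suc b))"
proof -
  let ?w = "replicate a x @ replicate b y"
  have w: "?w \<noteq> []" using assms(3) by auto
  have "hprod m (hlistprod m ?w) {x + y}
          \<subseteq> hsum (hprod m (hlistprod m ?w) {x}) (hprod m (hlistprod m ?w) {y})"
    by (rule hprod_singleton_add_subset[OF assms(1)])
  also have "hprod m (hlistprod m ?w) {x} = hlistprod m (x # ?w)"
    using hprod_commute[OF assms(2)] hlistprod_Cons[OF w] by simp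
  also have "hprod m (hlistprod m ?w) {y} = hlistprod m (?w @ [y])"
    using hlistprod_append[OF assms(1) w, of "[y]"] by simp
  finally show ?thesis
    by (simp add: hmonomial_def replicate_append_same)
qed

lemma hmonomial_hprod_hpow_add_subset:
  assumes "mult_hyperring m" and "hcommutative m" and "hyperideal m K"
    and "hpow m x n \<subseteq> K" and "hpow m y n \<subseteq> K"
  shows "1 \<le> a + b \<Longrightarrow> 2 * n + 1 \<le> a + b + c
           \<Longrightarrow> hprod m (hmonomial m x y a b) (hpow m (x + y) c) \<subseteq> K"
proof (induction c arbitrary: a b)
  case 0
  have "hprod m (hmonomial m x y a b) (hpow m (x + y) 0)
          \<subseteq> hsum (hmonomial m x y (Suc a) b) (hmonomial m x y a (Suc b))"
    using hmonomial_hprod_add_subset[OF assms(1,2) 0(1)] by simp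
  also have "\<dots> \<subseteq> K"
    using 0(2) by (intro hsum_subset_hyperideal[OF assms(3)] hmonomial_subset_hyperideal[OF assms]) simp_all
  finally show ?case .
next
  case (Suc c)
  let ?M = "hmonomial m x y a b" and ?S = "hpow m (x + y) c"
  have "hprod m ?M (hpow m (x + y) (Suc c)) = hprod m (hprod m ?M {x + y}) ?S"
    using hprod_commute[OF assms(2), of ?S] hprod_assoc[OF assms(1)] by simp
  also have "\<dots> \<subseteq> hprod m (hsum (hmonomial m x y (Suc a) b) (hmonomial m x y a (Suc b))) ?S"
    using hmonomial_hprod_add_subset[OF assms(1,2) Suc.prems(1)] by (rule hprod_mono) simp
  also have "\<dots> \<subseteq> K"
    using Suc by (intro hprod_hsum_subset_hyperideal[OF assms(1,3)]) simp_all
  finally show ?case .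
qed

lemma hpow_add_subset_hyperideal:
  assumes "mult_hyperring m" and "hcommutative m" and "hyperideal m K"
    and "hpow m x n \<subseteq> K" and "hpow m y n \<subseteq> K"
  shows "hpow m (x + y) (2 * n + 1) \<subseteq> K"
proof -
  let ?S = "hpow m (x + y) (2 * n)"
  have "hpow m (x + y) (2 * n + 1) \<subseteq> hprod m (hsum {x} {y}) ?S"
    using hprod_commute[OF assms(2), of ?S] by (auto intro: hprod_mono simp: hsum_def)
  also have "\<dots> \<subseteq> K"
    using hmonomial_hprod_hpow_add_subset[OF assms, of 1 0 "2 * n"]
      hmonomial_hprod_hpow_add_subset[OF assms, of 0 1 "2 * n"]
    by (intro hprod_hsum_subset_hyperideal[OF assms(1,3)]) (simp_all add: hmonomial_def)
  finally show ?thesis .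
qed

definition hradical :: "'a hyperop \<Rightarrow> 'a set \<Rightarrow> 'a set" where
  "hradical m K = {r. \<exists>k. hpow m r k \<subseteq> K}"

lemma hradical_hyperideal:
  assumes "mult_hyperring m" and "hcommutative m" and "hyperideal m K"
  shows "hyperideal m (hradical m K)"
  unfolding hyperideal_def
proof (intro conjI ballI allI impI)
  have "hpow m 0 0 \<subseteq> K"
    using hyperideal_zero[OF assms(3)] by simp
  then show "hradical m K \<noteq> {}"
    unfolding hradical_def by blast
next
  fix x y assume "x \<in> hradical m K" "y \<in> hradical m K"
  then obtain i j where "hpow m x i \<subseteq> K" and "hpow m y j \<subseteq> K"
    by (auto simp: hradical_def)
  then have x: "hpow m x (max i j) \<subseteq> K" and y: "hpow m y (max i j) \<subseteq> K"
    using hpow_subset_hyperideal_mono[OF assms(2,3)] by (meson max.cobounded1 max.cobounded2)+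
  have "hpow m (- y) (max i j) \<subseteq> K"
    using hpow_uminus_subset[OF assms(1)] y hyperideal_uminus[OF assms(3)] by blast
  then have "hpow m (x + - y) (2 * max i j + 1) \<subseteq> K"
    by (rule hpow_add_subset_hyperideal[OF assms x])
  then show "x - y \<in> hradical m K"
    unfolding hradical_def by (metis diff_conv_add_uminus mem_Collect_eq)
next
  fix r x assume "x \<in> hradical m K"
  then obtain k where k: "hpow m x k \<subseteq> K"
    by (auto simp: hradical_def)
  show "m r x \<subseteq> hradical m K"
  proof
    fix z assume "z \<in> m r x"
    then have "hpow m z k \<subseteq> hprod m (hpow m r k) (hpow m x k)"
      by (rule hpow_hprod_subset[OF assms(1,2)])
    also have "\<dots> \<subseteq> K"
      using hprod_subset_hyperideal_right[OF assms(3) k] .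
    finally show "z \<in> hradical m K"
      by (auto simp: hradical_def)
  qed
qed

lemma hyperideal_vimage:
  assumes "good_endo m \<alpha>" and "hyperideal m I"
  shows "hyperideal m (\<alpha> -` I)"
proof -
  have add: "\<alpha> (x + y) = \<alpha> x + \<alpha> y" and mult: "\<alpha> ` m x y = m (\<alpha> x) (\<alpha> y)" for x y
    using assms(1) unfolding good_endo_def by blast+
  show ?thesis
    unfolding hyperideal_def
  proof (intro conjI ballI allI impI)
    show "\<alpha> -` I \<noteq> {}"
      using add[of 0 0] hyperideal_zero[OF assms(2)] by auto
  next
    fix x y assume "x \<in> \<alpha> -` I" "y \<in> \<alpha> -` I"
    moreover have "\<alpha> (x - y) = \<alpha> x - \<alpha> y"
      using add[of "x - y" y] by (simp add: eq_diff_eq)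
    ultimately show "x - y \<in> \<alpha> -` I"
      using assms(2) unfolding hyperideal_def by simp
  next
    fix r x assume "x \<in> \<alpha> -` I"
    then have "m (\<alpha> r) (\<alpha> x) \<subseteq> I"
      using assms(2) unfolding hyperideal_def by simp
    then show "m r x \<subseteq> \<alpha> -` I"
      using mult[of r x] by blast
  qed
qed

lemma alpha_radical_eq_hradical_vimage: "alpha_radical m \<alpha> I = hradical m (\<alpha> -` I)"
  unfolding alpha_radical_def hradical_def by blast

lemma C_hyperideal_hpow_subset:
  assumes "mult_hyperring m" and "C_hyperideal m I" and "hpow m x k \<inter> I \<noteq> {}"
  shows "hpow m x k \<subseteq> I"
  using assms(2,3) hlistprod_replicate[OF assms(1), of k x]
  unfolding C_hyperideal_def by (metis Zero_not_Suc length_0_conv length_replicate)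

lemma C_hyperideal_hprod_hpow_subset:
  assumes "mult_hyperring m" and "C_hyperideal m I"
    and "hprod m (hpow m x i) (hpow m y j) \<inter> I \<noteq> {}"
  shows "hprod m (hpow m x i) (hpow m y j) \<subseteq> I"
proof -
  have "hprod m (hpow m x i) (hpow m y j) = hlistprod m (replicate (Suc i) x @ replicate (Suc j) y)"
    by (simp add: hlistprod_append[OF assms(1)] hlistprod_replicate[OF assms(1)] del: replicate_Suc)
  then show ?thesis
    using assms(2,3) unfolding C_hyperideal_def by (metis Nil_is_append_conv list.distinct(1) replicate_Suc)
qed

lemma alpha_radical_hmult_subsetD:
  assumes "mult_hyperring m" and "hcommutative m" and "good_endo m \<alpha>" and "C_hyperideal m I"
    and I_prime: "\<forall>a b. m a b \<subseteq> I \<longrightarrow> a \<in> I \<or> (\<exists>k. \<alpha> ` hpow m b k \<subseteq> I)"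
    and "m x y \<subseteq> alpha_radical m \<alpha> I"
  shows "x \<in> alpha_radical m \<alpha> I \<or> \<alpha> y \<in> alpha_radical m \<alpha> I"
proof -
  obtain z where z: "z \<in> m x y"
    using mult_hyperring_nonempty[OF assms(1)] by blast
  with assms(6) obtain k where zk: "\<alpha> ` hpow m z k \<subseteq> I"
    by (auto simp: alpha_radical_def)
  let ?A = "hprod m (hpow m (\<alpha> x) k) (hpow m (\<alpha> y) k)"
  have "\<alpha> ` hpow m z k \<subseteq> ?A"
    using image_mono[OF hpow_hprod_subset[OF assms(1,2) z, of k], of \<alpha>]
    by (simp add: image_hprod[OF assms(3)] image_hpow[OF assms(3)])
  then have "?A \<inter> I \<noteq> {}"
    using zk hpow_nonempty[OF assms(1), of z k] by blast
  then have A: "?A \<subseteq> I"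
    by (rule C_hyperideal_hprod_hpow_subset[OF assms(1,4)])
  show ?thesis
  proof (cases "hpow m (\<alpha> x) k \<subseteq> I")
    case True
    then show ?thesis
      by (auto simp: alpha_radical_def image_hpow[OF assms(3)])
  next
    case False
    then obtain a where a: "a \<in> hpow m (\<alpha> x) k" "a \<notin> I"
      by blast
    obtain b where b: "b \<in> hpow m (\<alpha> y) k"
      using hpow_nonempty[OF assms(1)] by blast
    have "m a b \<subseteq> I"
      using A subset_hprodI[OF a(1) b] by blast
    then obtain j where j: "\<alpha> ` hpow m b j \<subseteq> I"
      using I_prime a(2) by blast
    let ?N = "(k + 1) * (j + 1) - 1"
    have "\<alpha> ` hpow m b j \<subseteq> hpow m (\<alpha> (\<alpha> y)) ?N"
      using image_mono[OF hpow_hpow_subset[OF assms(1) b]] image_hpow[OF assms(3)] by metis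
    then have "hpow m (\<alpha> (\<alpha> y)) ?N \<inter> I \<noteq> {}"
      using j hpow_nonempty[OF assms(1), of b j] by blast
    then have "hpow m (\<alpha> (\<alpha> y)) ?N \<subseteq> I"
      by (rule C_hyperideal_hpow_subset[OF assms(1,4)])
    then show ?thesis
      by (auto simp: alpha_radical_def image_hpow[OF assms(3)])
  qed
qed

theorem mainTheorem16:
  fixes m :: "'a::ab_group_add hyperop" and e :: 'a and \<alpha> :: "'a \<Rightarrow> 'a" and I :: "'a set"
  assumes "mult_hyperring m" and "hcommutative m" and "hidentity m e" and "zero_absorbing m"
    and allC: "\<forall>J. hyperideal m J \<longrightarrow> C_hyperideal m J"
    and "good_endo m \<alpha>"
    and "hyperideal m I"
    and "\<forall>a b. m a b \<subseteq> I \<longrightarrow> a \<in> I \<or> (\<exists>k. \<alpha> ` (hpow m b k) \<subseteq> I)"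
  shows "alpha_prime m \<alpha> (alpha_radical m \<alpha> I)"
proof -
  have "hyperideal m (alpha_radical m \<alpha> I)"
    unfolding alpha_radical_eq_hradical_vimage
    using assms(1,2) hyperideal_vimage[OF assms(6,7)] by (rule hradical_hyperideal)
  moreover have "C_hyperideal m I"
    using allC assms(7) by blast
  ultimately show ?thesis
    unfolding alpha_prime_def using alpha_radical_hmult_subsetD[OF assms(1,2,6) _ assms(8)] by blast
qed

end
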